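(* Assume $FCA$. Then there is an entangled set of reals.
   Context: For $k\in\omega$, $t:k\to\{>,<\}$ and disjoint $a=\{a_0<\dots<a_{k-1}\}$, $b=\{b_0<\dots<b_{k-1}\}$ in $[\mathbb R]^k$ (increasing enumerations), $(a,b)$ realizes $t$ if $a_i\ t(i)\ b_i$ for every $i<k$. An uncountable $\mathcal E\subseteq\mathbb R$ is $k$-entangled if for every uncountable family $\mathcal A\subseteq[\mathcal E]^k$ of pairwise disjoint sets and every $t:k\to\{>,<\}$ there are $a\neq b$ in $\mathcal A$ such that $(a,b)$ realizes $t$; it is entangled if it is $k$-entangled for every $k\in\omega$. A type is a sequence $\tau=\{(m_k,n_{k+1},r_{k+1})\}_{k\in\omega}$ of natural numbers with $m_0=1$; $n_k\ge2$ for $k\ge1$; every $r\in\omega$ equals $r_k$ for infinitely many $k$; $m_k>r_{k+1}$; and $m_{k+1}=r_{k+1}+(m_k-r_{k+1})n_{k+1}$ for all $k$. For a set of ordinals $X$ and $\mathcal F\subseteq[X]^{<\omega}$, $\mathcal F_k$ is the set of elements of rank $k$ in $(\mathcal F,\subsetneq)$; $A\sqsubseteq B$ means $A\subseteq B$ and every element of $B$ below an element of $A$ is in $A$; $A<B$ means every element of $A$ is below every element of $B$. $\mathcal F$ is a construction scheme over $X$ of type $\tau$ if (1) every finite subset of $X$ lies in a member of $\mathcal F$; (2) $|F|=m_k$ for $F\in\mathcal F_k$; (3) $E\cap F\sqsubseteq E,F$ for $E,F\in\mathcal F_k$; (4) each $F\in\mathcal F_{k+1}$ is the union of uniquely determined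 $F_0,\dots,F_{n_{k+1}-1}\in\mathcal F_k$ forming a $\Delta$-system with root $R(F)$, $|R(F)|=r_{k+1}$, $R(F)<F_0\setminus R(F)<\dots<F_{n_{k+1}-1}\setminus R(F)$. For a construction scheme $\mathcal F$ over $\omega_1$, $l\ge1$, $F\in\mathcal F_l$ and finite $\mathcal C\subseteq[\omega_1]^{<\omega}$: $F$ fully captures $\mathcal C$ if $|\mathcal C|=n_l$ and $\mathcal C$ can be enumerated as $\{c_i\}_{i<n_l}$ with $c_i\subseteq F_i$, $c_i\setminus R(F)\neq\emptyset$ and $\phi_i[c_0]=c_i$ where $\phi_i:F_0\to F_i$ is the increasing bijection. $\mathcal F$ is fully capturing if for every uncountable $S\subseteq[\omega_1]^{<\omega}$ and every $k\in\omega$ there are a finite $\mathcal C\subseteq S$, $l>k$ and $F\in\mathcal F_l$ fully capturing $\mathcal C$. $FCA$ is the statement: for every type $\tau$ there is a fully capturing construction scheme over $\omega_1$ of type $\tau$. *)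

theory Defs
  imports Complex_Main "HOL-Library.Countable_Set"
begin

definition ksubsets :: "nat \<Rightarrow> 'b set \<Rightarrow> 'b set set" where
  "ksubsets k E = {a. a \<subseteq> E \<and> finite a \<and> card a = k}"

text \<open>t i = True encodes the symbol <, t i = False encodes the symbol >.
  The i-th element (increasing enumeration) of a finite set a of reals is
  sorted_list_of_set a ! i.\<close>
definition realizes :: "nat \<Rightarrow> (nat \<Rightarrow> bool) \<Rightarrow> real set \<Rightarrow> real set \<Rightarrow> bool" where
  "realizes k t a b \<longleftrightarrow> a \<inter> b = {} \<and>
     (\<forall>i<k. if t i then sorted_list_of_set a ! i < sorted_list_of_set b ! i
                  else sorted_list_of_set a ! i > sorted_list_of_set b ! i)"

definition k_entangled :: "nat \<Rightarrow> real set \<Rightarrow> bool" where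
  "k_entangled k E \<longleftrightarrow> \<not> countable E \<and>
     (\<forall>A t. A \<subseteq> ksubsets k E \<and> \<not> countable A \<and>
            (\<forall>a\<in>A. \<forall>b\<in>A. a \<noteq> b \<longrightarrow> a \<inter> b = {}) \<longrightarrow>
            (\<exists>a\<in>A. \<exists>b\<in>A. a \<noteq> b \<and> realizes k t a b))"

definition entangled :: "real set \<Rightarrow> bool" where
  "entangled E \<longleftrightarrow> (\<forall>k. k_entangled k E)"

text \<open>A type tau = ((m_k, n_(k+1), r_(k+1)))_k is given by three sequences m n r :: nat => nat;
  the values n 0 and r 0 are irrelevant.\<close>
definition is_type :: "(nat \<Rightarrow> nat) \<Rightarrow> (nat \<Rightarrow> nat) \<Rightarrow> (nat \<Rightarrow> nat) \<Rightarrow> bool" where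
  "is_type m n r \<longleftrightarrow> m 0 = 1 \<and> (\<forall>k\<ge>1. n k \<ge> 2) \<and>
     (\<forall>x. infinite {k. k \<ge> 1 \<and> r k = x}) \<and>
     (\<forall>k. m k > r (Suc k)) \<and>
     (\<forall>k. m (Suc k) = r (Suc k) + (m k - r (Suc k)) * n (Suc k))"

definition chain_below :: "'a set set \<Rightarrow> 'a set \<Rightarrow> nat \<Rightarrow> bool" where
  "chain_below FF A k \<longleftrightarrow> (\<exists>c::nat \<Rightarrow> 'a set. c k = A \<and> (\<forall>i\<le>k. c i \<in> FF) \<and>
       (\<forall>i<k. c i \<subset> c (Suc i)))"

definition has_rank :: "'a set set \<Rightarrow> 'a set \<Rightarrow> nat \<Rightarrow> bool" where
  "has_rank FF A k \<longleftrightarrow> A \<in> FF \<and> chain_below FF A k \<and> \<not> chain_below FF A (Suc k)"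

definition level :: "'a set set \<Rightarrow> nat \<Rightarrow> 'a set set" where
  "level FF k = {A. has_rank FF A k}"

definition set_less :: "'a::order set \<Rightarrow> 'a set \<Rightarrow> bool" where
  "set_less A B \<longleftrightarrow> (\<forall>a\<in>A. \<forall>b\<in>B. a < b)"

definition initial_sub :: "'a::order set \<Rightarrow> 'a set \<Rightarrow> bool" where
  "initial_sub A B \<longleftrightarrow> A \<subseteq> B \<and> (\<forall>b\<in>B. (\<exists>a\<in>A. b < a) \<longrightarrow> b \<in> A)"

definition decomp :: "'a::order set set \<Rightarrow> (nat \<Rightarrow> nat) \<Rightarrow> (nat \<Rightarrow> nat) \<Rightarrow> nat \<Rightarrow>
     'a set \<Rightarrow> (nat \<Rightarrow> 'a set) \<Rightarrow> 'a set \<Rightarrow> bool" where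
  "decomp FF n r k F Fs R \<longleftrightarrow>
     (\<forall>i<n (Suc k). Fs i \<in> level FF k) \<and>
     F = (\<Union>i<n (Suc k). Fs i) \<and>
     (\<forall>i<n (Suc k). \<forall>j<n (Suc k). i \<noteq> j \<longrightarrow> Fs i \<inter> Fs j = R) \<and>
     card R = r (Suc k) \<and>
     (\<forall>i<n (Suc k). set_less R (Fs i - R)) \<and>
     (\<forall>i. Suc i < n (Suc k) \<longrightarrow> set_less (Fs i - R) (Fs (Suc i) - R))"

definition construction_scheme :: "'a::order set \<Rightarrow> 'a set set \<Rightarrow>
     (nat \<Rightarrow> nat) \<Rightarrow> (nat \<Rightarrow> nat) \<Rightarrow> (nat \<Rightarrow> nat) \<Rightarrow> bool" where
  "construction_scheme X FF m n r \<longleftrightarrow>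
     (\<forall>F\<in>FF. finite F \<and> F \<subseteq> X) \<and>
     (\<forall>A. finite A \<and> A \<subseteq> X \<longrightarrow> (\<exists>F\<in>FF. A \<subseteq> F)) \<and>
     (\<forall>k. \<forall>F\<in>level FF k. card F = m k) \<and>
     (\<forall>k. \<forall>E\<in>level FF k. \<forall>F\<in>level FF k. initial_sub (E \<inter> F) E \<and> initial_sub (E \<inter> F) F) \<and>
     (\<forall>k. \<forall>F\<in>level FF (Suc k).
        (\<exists>Fs R. decomp FF n r k F Fs R) \<and>
        (\<forall>Fs R Gs Q. decomp FF n r k F Fs R \<and> decomp FF n r k F Gs Q \<longrightarrow>
            (\<forall>i<n (Suc k). Fs i = Gs i)))"

definition incr_bij :: "'a::order set \<Rightarrow> 'a set \<Rightarrow> ('a \<Rightarrow> 'a) \<Rightarrow> bool" where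
  "incr_bij A B f \<longleftrightarrow> bij_betw f A B \<and> strict_mono_on A f"

text \<open>The decomposition (F_i) and the root R(F)
  are unique, as are the increasing bijections phi_i, so existential quantification over
  them is the same as referring to them.\<close>
definition fully_captures :: "'a::order set set \<Rightarrow> (nat \<Rightarrow> nat) \<Rightarrow> (nat \<Rightarrow> nat) \<Rightarrow> nat \<Rightarrow>
     'a set \<Rightarrow> 'a set set \<Rightarrow> bool" where
  "fully_captures FF n r l F C \<longleftrightarrow> l \<ge> 1 \<and> F \<in> level FF l \<and> finite C \<and> card C = n l \<and>
     (\<exists>Fs R. decomp FF n r (l - 1) F Fs R \<and>
       (\<exists>c::nat \<Rightarrow> 'a set. C = c ` {..<n l} \<and>
          (\<forall>i<n l. c i \<subseteq> Fs i \<and> c i - R \<noteq> {} \<and>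
             (\<exists>\<phi>. incr_bij (Fs 0) (Fs i) \<phi> \<and> \<phi> ` c 0 = c i))))"

definition fully_capturing :: "'a::order set set \<Rightarrow> (nat \<Rightarrow> nat) \<Rightarrow> (nat \<Rightarrow> nat) \<Rightarrow> bool" where
  "fully_capturing FF n r \<longleftrightarrow>
     (\<forall>S k. (\<forall>s\<in>S. finite s) \<and> \<not> countable S \<longrightarrow>
        (\<exists>C l F. C \<subseteq> S \<and> finite C \<and> l > k \<and> F \<in> level FF l \<and> fully_captures FF n r l F C))"

text \<open>omega_1 is represented by a type 'a with a well-order that is uncountable and all of
  whose proper initial segments are countable (these assumptions appear in the theorem).\<close>
definition FCA :: "'a::wellorder itself \<Rightarrow> bool" where
  "FCA _ \<longleftrightarrow> (\<forall>m n r. is_type m n r \<longrightarrow>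
      (\<exists>FF::'a set set. construction_scheme UNIV FF m n r \<and> fully_capturing FF n r))"

end

theory Submission
  imports Defs "HOL-Library.Nat_Bijection"
begin

text \<open>Take a fully capturing scheme whose type has every root size \<open>r\<close> infinitely often and
  \<open>n (k + 1) = 2 ^ m k\<close>. Every \<open>\<alpha>\<close> has a well defined position \<open>pos l \<alpha>\<close> inside any member of
  level \<open>l\<close> containing it, and \<open>\<alpha>\<close> is sent to the real whose \<open>l\<close>-th digit, read
  lexicographically, is \<open>pos l \<alpha>\<close> plus \<open>m l\<close> if \<open>\<alpha>\<close> is marked: outside the root of its
  level-\<open>l\<close> set, in the block whose index codes a set containing \<open>pos (l - 1) \<alpha>\<close>.
  The increasing bijections between the blocks of a set capturing a family of \<open>k\<close>-sets preserve all
  digits below its level, hence the order of the reals; so the copies of the captured set in two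
  blocks whose indices code complementary sets of positions differ first at the marks, and these
  can be chosen to realize any prescribed pattern of \<open><\<close> and \<open>>\<close>.\<close>

lemma sorted_list_of_set_image_strict_mono:
  fixes h :: "'a::linorder \<Rightarrow> 'b::linorder"
  assumes "finite s" and "strict_mono_on s h"
  shows "sorted_list_of_set (h ` s) = map h (sorted_list_of_set s)"
proof -
  have "inj_on h s" using assms(2) by (rule strict_mono_on_imp_inj_on)
  moreover have "sorted_wrt (\<lambda>x y. h x < h y) (sorted_list_of_set s)"
    using assms by (intro sorted_wrt_mono_rel[OF _ strict_sorted_list_of_set])
      (auto simp: strict_mono_on_def)
  then have "sorted_wrt (<) (map h (sorted_list_of_set s))"
    by (simp add: sorted_wrt_map)
  moreover have "length (map h (sorted_list_of_set s)) = card (h ` s)"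
    using \<open>inj_on h s\<close> assms(1) by (simp add: card_image)
  moreover have "set (map h (sorted_list_of_set s)) = h ` s"
    using assms(1) by simp
  ultimately show ?thesis
    using assms(1) sorted_list_of_set_unique[of "h ` s" "map h (sorted_list_of_set s)"] by blast
qed

lemma card_less_mono:
  fixes F :: "'a::linorder set"
  assumes "finite F" "\<alpha> \<in> F" "\<alpha> < \<beta>"
  shows "card {\<gamma>\<in>F. \<gamma> < \<alpha>} < card {\<gamma>\<in>F. \<gamma> < \<beta>}"
  using assms by (intro psubset_card_mono) auto

lemma inj_on_card_less:
  fixes F :: "'a::linorder set"
  assumes "finite F"
  shows "inj_on (\<lambda>\<alpha>. card {\<gamma>\<in>F. \<gamma> < \<alpha>}) F"
proof (rule inj_onI)
  fix \<alpha> \<beta> assume "\<alpha> \<in> F" "\<beta> \<in> F" "card {\<gamma>\<in>F. \<gamma> < \<alpha>} = card {\<gamma>\<in>F. \<gamma> < \<beta>}"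
  then show "\<alpha> = \<beta>"
    using card_less_mono[OF assms, of \<alpha> \<beta>] card_less_mono[OF assms, of \<beta> \<alpha>]
    by (cases \<alpha> \<beta> rule: linorder_cases) auto
qed

lemma card_less_less_card:
  fixes F :: "'a::linorder set"
  assumes "finite F" "\<alpha> \<in> F"
  shows "card {\<gamma>\<in>F. \<gamma> < \<alpha>} < card F"
  using assms by (intro psubset_card_mono) auto

lemma card_less_incr_bij:
  fixes \<phi> :: "'a::linorder \<Rightarrow> 'a"
  assumes "incr_bij A B \<phi>" "\<gamma> \<in> A"
  shows "card {\<beta>\<in>B. \<beta> < \<phi> \<gamma>} = card {\<beta>\<in>A. \<beta> < \<gamma>}"
proof -
  have bij: "bij_betw \<phi> A B" and mono: "strict_mono_on A \<phi>"
    using assms(1) unfolding incr_bij_def by auto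
  have less_iff: "\<phi> \<beta> < \<phi> \<gamma> \<longleftrightarrow> \<beta> < \<gamma>" if "\<beta> \<in> A" for \<beta>
    using mono that assms(2) by (metis not_less_iff_gr_or_eq strict_mono_onD)
  have "{\<beta>\<in>B. \<beta> < \<phi> \<gamma>} = \<phi> ` {\<beta>\<in>A. \<beta> < \<gamma>}"
    using bij less_iff by (auto simp: bij_betw_def)
  moreover have "inj_on \<phi> {\<beta>\<in>A. \<beta> < \<gamma>}"
    by (rule inj_on_subset[OF bij_betw_imp_inj_on[OF bij]]) blast
  ultimately show ?thesis by (simp add: card_image)
qed

lemma set_encode_less_power:
  assumes "Q \<subseteq> {..<M}"
  shows "set_encode Q < 2 ^ M"
proof -
  have "set_encode Q = (\<Sum>q\<in>Q. 2 ^ q)"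
    by (simp add: set_encode_def)
  also have "\<dots> \<le> (\<Sum>q<M. 2 ^ q)"
    using assms by (intro sum_mono2) auto
  also have "\<dots> < 2 ^ M"
    by (induction M) simp_all
  finally show ?thesis .
qed

lemma exists_complementary_codes:
  fixes p :: "nat \<Rightarrow> nat" and t :: "nat \<Rightarrow> bool"
  assumes inj: "inj_on p {..<K}" and bounded: "p ` {..<K} \<subseteq> {..<M}"
    and "0 < M" and "2 ^ M \<le> N"
  obtains i i' where "i < N" "i' < N" "i \<noteq> i'"
    and "\<And>j. j < K \<Longrightarrow> p j \<in> set_decode i \<longleftrightarrow> \<not> t j"
    and "\<And>j. j < K \<Longrightarrow> p j \<in> set_decode i' \<longleftrightarrow> t j"
proof -
  define Q where "Q = p ` {j. j < K \<and> t j}"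
  have Q_iff: "p j \<in> Q \<longleftrightarrow> t j" if "j < K" for j
    using inj_onD[OF inj] that unfolding Q_def by auto
  have Q_sub: "Q \<subseteq> {..<M}" and "finite Q"
    using bounded unfolding Q_def by auto
  have decode: "set_decode (set_encode ({..<M} - Q)) = {..<M} - Q" "set_decode (set_encode Q) = Q"
    using \<open>finite Q\<close> by auto
  have "set_encode ({..<M} - Q) < N" "set_encode Q < N"
    using set_encode_less_power[of "{..<M} - Q" M] set_encode_less_power[OF Q_sub] assms(4) by auto
  moreover have "set_encode ({..<M} - Q) \<noteq> set_encode Q"
    using decode \<open>0 < M\<close> by (metis Diff_iff lessThan_iff)
  moreover have "p j \<in> {..<M}" if "j < K" for j
    using bounded that by auto
  ultimately show ?thesis
    using that decode Q_iff by auto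
qed

lemma inv_into_nth_sorted_list_of_set_image:
  fixes f :: "'a \<Rightarrow> 'b::linorder"
  assumes "finite c" "inj_on f c"
  defines "e \<equiv> \<lambda>j. inv_into c f (sorted_list_of_set (f ` c) ! j)"
  shows "\<And>j. j < card c \<Longrightarrow> e j \<in> c"
    and "\<And>j. j < card c \<Longrightarrow> f (e j) = sorted_list_of_set (f ` c) ! j"
    and "inj_on e {..<card c}"
proof -
  have len: "length (sorted_list_of_set (f ` c)) = card c"
    using assms(1,2) by (simp add: card_image)
  have mem: "sorted_list_of_set (f ` c) ! j \<in> f ` c" if "j < card c" for j
    using nth_mem[of j "sorted_list_of_set (f ` c)"] len that assms(1) by simp
  show e_in: "e j \<in> c" and f_e: "f (e j) = sorted_list_of_set (f ` c) ! j" if "j < card c" for j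
    unfolding e_def using mem[OF that] by (auto intro: inv_into_into f_inv_into_f)
  show "inj_on e {..<card c}"
  proof (rule inj_onI)
    fix j j' assume "j \<in> {..<card c}" "j' \<in> {..<card c}" "e j = e j'"
    then show "j = j'"
      using f_e len by (metis distinct_sorted_list_of_set lessThan_iff nth_eq_iff_index_eq)
  qed
qed

lemma exists_first_difference:
  fixes f g :: "nat \<Rightarrow> 'b"
  assumes "f L \<noteq> g L"
  shows "\<exists>L'\<le>L. f L' \<noteq> g L' \<and> (\<forall>j<L'. f j = g j)"
proof -
  define L' where "L' = (LEAST l. f l \<noteq> g l)"
  have "f L' \<noteq> g L'"
    unfolding L'_def by (rule LeastI[where P = "\<lambda>l. f l \<noteq> g l"]) (rule assms)
  moreover have "L' \<le> L"
    unfolding L'_def by (rule Least_le) (rule assms)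
  moreover have "f j = g j" if "j < L'" for j
    using not_less_Least[OF that[unfolded L'_def]] by blast
  ultimately show ?thesis by blast
qed

section \<open>Lexicographic series\<close>

text \<open>Each weight exceeds the total contribution of all later digits \<open>d l \<le> B l\<close>, so comparing
  \<open>lex_value B\<close> compares digit sequences lexicographically.\<close>

fun lex_weight :: "(nat \<Rightarrow> nat) \<Rightarrow> nat \<Rightarrow> real" where
  "lex_weight B 0 = 1"
| "lex_weight B (Suc l) = lex_weight B l / (4 * (real (B (Suc l)) + 1))"

declare lex_weight.simps(2)[simp del]
lemmas lex_weight_Suc = lex_weight.simps(2)

definition lex_value :: "(nat \<Rightarrow> nat) \<Rightarrow> (nat \<Rightarrow> nat) \<Rightarrow> real" where
  "lex_value B d = (\<Sum>l. real (d l) * lex_weight B l)"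

lemma lex_weight_pos: "0 < lex_weight B l"
  by (induction l) (simp_all add: lex_weight_Suc add_pos_nonneg)

lemma lex_term_le:
  assumes "d (Suc l) \<le> B (Suc l)"
  shows "real (d (Suc l)) * lex_weight B (Suc l) \<le> lex_weight B l / 4"
proof -
  have "real (d (Suc l)) \<le> real (B (Suc l)) + 1"
    using assms by (simp add: add_increasing2)
  then have "real (d (Suc l)) / (4 * (real (B (Suc l)) + 1)) \<le> 1 / 4"
    by (simp add: field_simps add_pos_nonneg)
  from mult_left_mono[OF this less_imp_le[OF lex_weight_pos]] show ?thesis
    by (simp add: lex_weight_Suc field_simps)
qed

lemma lex_weight_Suc_le: "lex_weight B (Suc l) \<le> lex_weight B l / 4"
proof -
  have "4 \<le> 4 * (real (B (Suc l)) + 1)"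
    by simp
  then show ?thesis
    unfolding lex_weight_Suc using lex_weight_pos[of B l] by (intro divide_left_mono) auto
qed

lemma lex_weight_shift: "lex_weight B (L + i) \<le> lex_weight B L * (1/4) ^ i"
proof (induction i)
  case (Suc i)
  have "lex_weight B (L + Suc i) \<le> lex_weight B (L + i) / 4"
    using lex_weight_Suc_le[of B "L + i"] by simp
  also have "\<dots> \<le> lex_weight B L * (1/4) ^ Suc i"
    using Suc by simp
  finally show ?case .
qed simp

lemma lex_tail:
  assumes "\<forall>l. d l \<le> B l"
  shows "summable (\<lambda>i. real (d (i + Suc L)) * lex_weight B (i + Suc L))"
    and "(\<Sum>i. real (d (i + Suc L)) * lex_weight B (i + Suc L)) \<le> lex_weight B L / 3"
proof -
  let ?t = "\<lambda>i. real (d (i + Suc L)) * lex_weight B (i + Suc L)"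
  let ?g = "\<lambda>i. lex_weight B L * (1/4::real) ^ Suc i"
  have le: "?t i \<le> ?g i" for i
  proof -
    have "?t i = real (d (Suc (L + i))) * lex_weight B (Suc (L + i))"
      by (simp add: add.commute)
    also have "\<dots> \<le> lex_weight B (L + i) / 4"
      using assms by (intro lex_term_le) simp
    also have "\<dots> \<le> lex_weight B L * (1/4) ^ i / 4"
      by (intro divide_right_mono lex_weight_shift) simp
    also have "\<dots> = ?g i"
      by simp
    finally show ?thesis .
  qed
  have nonneg: "0 \<le> ?t i" for i
    using lex_weight_pos[of B "i + Suc L"] by simp
  have "(\<lambda>i. (1/4::real) * (1/4) ^ i) sums ((1/4) * (1 / (1 - 1/4)))"
    by (intro sums_mult geometric_sums) simp
  then have "(\<lambda>i. (1/4::real) ^ Suc i) sums (1/3)"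
    by simp
  then have sums: "?g sums (lex_weight B L / 3)"
    using sums_mult[of "\<lambda>i. (1/4::real) ^ Suc i" "1/3" "lex_weight B L"] by simp
  show summable: "summable ?t"
    by (rule summable_comparison_test'[of ?g 0]) (use sums le nonneg in \<open>auto simp: sums_iff\<close>)
  show "suminf ?t \<le> lex_weight B L / 3"
    using suminf_le[OF le summable] sums by (simp add: sums_iff)
qed

lemma summable_lex:
  assumes "\<forall>l. d l \<le> B l"
  shows "summable (\<lambda>l. real (d l) * lex_weight B l)"
  using lex_tail(1)[OF assms, of 0] summable_iff_shift[of "\<lambda>l. real (d l) * lex_weight B l" 1]
  by simp

lemma lex_value_less:
  assumes bounded: "\<forall>l. d l \<le> B l" "\<forall>l. d' l \<le> B l"
    and agree: "\<forall>j<L. d j = d' j" and less: "d L < d' L"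
  shows "lex_value B d < lex_value B d'"
proof -
  let ?t = "\<lambda>d l. real (d l) * lex_weight B l"
  have split: "lex_value B d = (\<Sum>i. ?t d (i + Suc L)) + (\<Sum>i<Suc L. ?t d i)"
    if "\<forall>l. d l \<le> B l" for d
    unfolding lex_value_def by (rule suminf_split_initial_segment[OF summable_lex[OF that]])
  have "(\<Sum>i<Suc L. ?t d i) + lex_weight B L \<le> (\<Sum>i<Suc L. ?t d' i)"
  proof -
    have "(real (d L) + 1) * lex_weight B L \<le> real (d' L) * lex_weight B L"
      using less lex_weight_pos[of B L] by (intro mult_right_mono) auto
    then show ?thesis
      using agree by (simp add: algebra_simps)
  qed
  moreover have "0 \<le> (\<Sum>i. ?t d' (i + Suc L))"
    using lex_weight_pos[of B] by (intro suminf_nonneg lex_tail(1)[OF bounded(2)]) (simp add: less_imp_le)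
  moreover have "lex_weight B L / 3 < lex_weight B L"
    using lex_weight_pos[of B L] by simp
  ultimately show ?thesis
    using split[OF bounded(1)] split[OF bounded(2)] lex_tail(2)[OF bounded(1), of L] by linarith
qed

lemma lex_value_less_iff:
  assumes bounded: "\<forall>l. d l \<le> B l" "\<forall>l. d' l \<le> B l"
    and agree: "\<forall>j<L. d j = d' j" and differ: "d L \<noteq> d' L"
  shows "lex_value B d < lex_value B d' \<longleftrightarrow> d L < d' L"
proof
  assume less: "lex_value B d < lex_value B d'"
  show "d L < d' L"
  proof (rule ccontr)
    assume "\<not> d L < d' L"
    then have "d' L < d L"
      using differ by simp
    moreover have "\<forall>j<L. d' j = d j"
      using agree by simp
    ultimately have "lex_value B d' < lex_value B d"
      using lex_value_less[OF bounded(2,1)] by blast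
    with less show False
      by simp
  qed
qed (rule lex_value_less[OF bounded agree])

lemma lex_value_inj:
  assumes bounded: "\<forall>l. d l \<le> B l" "\<forall>l. d' l \<le> B l" and "d L \<noteq> d' L"
  shows "lex_value B d \<noteq> lex_value B d'"
proof -
  obtain L' where agree: "\<forall>j<L'. d j = d' j" and differ: "d L' \<noteq> d' L'"
    using exists_first_difference[of d L d'] assms(3) by blast
  show ?thesis
  proof (cases "d L' < d' L'")
    case True
    then show ?thesis
      using lex_value_less[OF bounded agree] by simp
  next
    case False
    then have "d' L' < d L'"
      using differ by simp
    moreover have "\<forall>j<L'. d' j = d j"
      using agree by simp
    ultimately show ?thesis
      using lex_value_less[OF bounded(2,1)] by (metis less_irrefl)
  qed
qed

section \<open>A type with large splitting numbers\<close>

text \<open>Every value of \<open>r\<close> recurs infinitely often because \<open>prod_decode\<close> enumerates all pairs;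
  \<open>n (k + 1) = 2 ^ m k\<close> makes every set of level-\<open>k\<close> positions the code of a block index.\<close>

definition coding_r :: "nat \<Rightarrow> nat" where
  "coding_r k = fst (prod_decode (k - 1))"

fun coding_m :: "nat \<Rightarrow> nat" where
  "coding_m 0 = 1"
| "coding_m (Suc k) = coding_r (Suc k) + (coding_m k - coding_r (Suc k)) * 2 ^ coding_m k"

definition coding_n :: "nat \<Rightarrow> nat" where
  "coding_n k = 2 ^ coding_m (k - 1)"

lemma coding_r_le: "coding_r (Suc k) \<le> k"
  unfolding coding_r_def by (metis diff_Suc_1 le_prod_encode_1 prod.collapse prod_decode_inverse)

lemma coding_m_gt: "k < coding_m k"
proof (induction k)
  case (Suc k)
  have "0 < coding_m k - coding_r (Suc k)"
    using Suc coding_r_le[of k] by linarith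
  then have "coding_m k < coding_r (Suc k) + (coding_m k - coding_r (Suc k)) * 2"
    by simp
  also have "\<dots> \<le> coding_m (Suc k)"
    using Suc by (simp add: self_le_power)
  finally show ?case
    using Suc by simp
qed simp

lemma is_type_coding: "is_type coding_m coding_n coding_r"
  unfolding is_type_def
proof (intro conjI allI impI)
  fix x
  have "inj (\<lambda>y. Suc (prod_encode (x, y)))"
    by (auto intro: injI dest: inj_prod_encode[THEN inj_onD])
  then have "infinite (range (\<lambda>y. Suc (prod_encode (x, y))))"
    by (rule range_inj_infinite)
  moreover have "range (\<lambda>y. Suc (prod_encode (x, y))) \<subseteq> {k. 1 \<le> k \<and> coding_r k = x}"
    by (auto simp: coding_r_def)
  ultimately show "infinite {k. 1 \<le> k \<and> coding_r k = x}"
    using finite_subset by blast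
next
  fix k
  show "coding_r (Suc k) < coding_m k"
    using coding_r_le[of k] coding_m_gt[of k] by simp
next
  fix k :: nat
  assume "1 \<le> k"
  then show "2 \<le> coding_n k"
    using coding_m_gt[of "k - 1"] by (simp add: coding_n_def self_le_power)
qed (simp_all add: coding_n_def)

section \<open>Positions in a construction scheme\<close>

lemma chain_below_le_card:
  assumes "chain_below FF A k" "finite A"
  shows "k \<le> card A"
proof -
  obtain c where c: "c k = A" "\<forall>i<k. c i \<subset> c (Suc i)"
    using assms(1) unfolding chain_below_def by blast
  have sub: "c i \<subseteq> A" if "i \<le> k" for i
    using that
  proof (induction "k - i" arbitrary: i)
    case (Suc d)
    then have "c (Suc i) \<subseteq> A"
      by simp
    moreover have "c i \<subset> c (Suc i)"
      using c(2) Suc by simp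
    ultimately show ?case
      by blast
  qed (simp add: c(1))
  have "i \<le> card (c i)" if "i \<le> k" for i
    using that
  proof (induction i)
    case (Suc i)
    have "finite (c (Suc i))"
      using sub[OF Suc.prems] assms(2) by (rule finite_subset)
    then have "card (c i) < card (c (Suc i))"
      using c(2) Suc.prems by (intro psubset_card_mono) auto
    then show ?case
      using Suc by simp
  qed simp
  from this[of k] show ?thesis
    using c by simp
qed

locale scheme =
  fixes FF :: "'a::linorder set set" and m n r :: "nat \<Rightarrow> nat"
  assumes construction_scheme: "construction_scheme UNIV FF m n r"
    and type: "is_type m n r"
    and infinite_carrier: "infinite (UNIV :: 'a set)"
begin

lemmas scheme_conditions = construction_scheme[unfolded construction_scheme_def]

lemma finite_member: "F \<in> FF \<Longrightarrow> finite F"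
  using scheme_conditions[THEN conjunct1] by blast

lemma covered: "finite A \<Longrightarrow> \<exists>F\<in>FF. A \<subseteq> F"
  using scheme_conditions[THEN conjunct2, THEN conjunct1] by blast

lemma card_level: "F \<in> level FF k \<Longrightarrow> card F = m k"
  using scheme_conditions[THEN conjunct2, THEN conjunct2, THEN conjunct1] by blast

lemma initial_sub_level_inter: "E \<in> level FF k \<Longrightarrow> F \<in> level FF k \<Longrightarrow> initial_sub (E \<inter> F) E"
  using scheme_conditions[THEN conjunct2, THEN conjunct2, THEN conjunct2, THEN conjunct1] by blast

lemma decomp_exists: "F \<in> level FF (Suc k) \<Longrightarrow> \<exists>Fs R. decomp FF n r k F Fs R"
  using scheme_conditions[THEN conjunct2, THEN conjunct2, THEN conjunct2, THEN conjunct2] by blast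

lemma level_member: "F \<in> level FF k \<Longrightarrow> F \<in> FF"
  by (simp add: level_def has_rank_def)

lemma finite_level: "F \<in> level FF k \<Longrightarrow> finite F"
  using finite_member level_member by blast

lemma root_less_m: "r (Suc k) < m k"
  using type unfolding is_type_def by blast

lemma two_le_n: "2 \<le> n (Suc k)"
  using type unfolding is_type_def by simp

lemma m_Suc: "m (Suc k) = r (Suc k) + (m k - r (Suc k)) * n (Suc k)"
  using type unfolding is_type_def by blast

lemma m_less_m_Suc: "m k < m (Suc k)"
proof -
  have "(m k - r (Suc k)) * 2 \<le> (m k - r (Suc k)) * n (Suc k)"
    using two_le_n by simp
  then show ?thesis
    using m_Suc[of k] root_less_m[of k] by linarith
qed

lemma strict_mono_m: "strict_mono m"
  by (simp add: strict_mono_Suc_iff m_less_m_Suc)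

lemma member_level: assumes "F \<in> FF" shows "\<exists>K. F \<in> level FF K"
proof -
  let ?K = "GREATEST k. chain_below FF F k"
  have bound: "\<forall>k. chain_below FF F k \<longrightarrow> k \<le> card F"
    using chain_below_le_card finite_member[OF assms] by blast
  have "chain_below FF F 0"
    unfolding chain_below_def using assms by (intro exI[of _ "\<lambda>_. F"]) simp
  then have "chain_below FF F ?K"
    by (rule GreatestI_nat) (use bound in blast)
  moreover have "\<not> chain_below FF F (Suc ?K)"
  proof
    assume "chain_below FF F (Suc ?K)"
    then have "Suc ?K \<le> ?K"
      by (rule Greatest_le_nat) (use bound in blast)
    then show False
      by simp
  qed
  ultimately show ?thesis
    using assms unfolding level_def has_rank_def by blast
qed

lemma decomp_level: "decomp FF n r k F Fs R \<Longrightarrow> i < n (Suc k) \<Longrightarrow> Fs i \<in> level FF k"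
  unfolding decomp_def by blast

lemma decomp_union: "decomp FF n r k F Fs R \<Longrightarrow> F = (\<Union>i<n (Suc k). Fs i)"
  unfolding decomp_def by blast

lemma decomp_inter:
  "decomp FF n r k F Fs R \<Longrightarrow> i < n (Suc k) \<Longrightarrow> j < n (Suc k) \<Longrightarrow> i \<noteq> j \<Longrightarrow> Fs i \<inter> Fs j = R"
  unfolding decomp_def by blast

lemma decomp_card_root: "decomp FF n r k F Fs R \<Longrightarrow> card R = r (Suc k)"
  unfolding decomp_def by blast

lemma decomp_root_less:
  "decomp FF n r k F Fs R \<Longrightarrow> i < n (Suc k) \<Longrightarrow> \<beta> \<in> R \<Longrightarrow> \<gamma> \<in> Fs i - R \<Longrightarrow> \<beta> < \<gamma>"
  unfolding decomp_def set_less_def by blast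

lemma decomp_root_subset:
  assumes d: "decomp FF n r k F Fs R" and i: "i < n (Suc k)"
  shows "R \<subseteq> Fs i"
proof -
  let ?j = "if i = 0 then 1 else 0"
  have "?j < n (Suc k)"
    using two_le_n[of k] by simp
  moreover have "i \<noteq> ?j"
    by simp
  ultimately have "Fs i \<inter> Fs ?j = R"
    by (rule decomp_inter[OF d i])
  then show ?thesis
    by blast
qed

lemma decomp_finite: "decomp FF n r k F Fs R \<Longrightarrow> i < n (Suc k) \<Longrightarrow> finite (Fs i)"
  by (rule finite_level[OF decomp_level])

lemma decomp_finite_root: "decomp FF n r k F Fs R \<Longrightarrow> finite R"
  using decomp_root_subset[of k F Fs R 0] decomp_finite[of k F Fs R 0] two_le_n[of k]
    finite_subset by simp

lemma decomp_card_block: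
  assumes d: "decomp FF n r k F Fs R" and i: "i < n (Suc k)"
  shows "card (Fs i - R) = m k - r (Suc k)"
  using card_Diff_subset[OF decomp_finite_root[OF d] decomp_root_subset[OF d i]]
    decomp_card_root[OF d] card_level[OF decomp_level[OF d i]] by simp

lemma decomp_blocks_less:
  assumes d: "decomp FF n r k F Fs R"
  shows "i < j \<Longrightarrow> j < n (Suc k) \<Longrightarrow> \<beta> \<in> Fs i - R \<Longrightarrow> \<gamma> \<in> Fs j - R \<Longrightarrow> \<beta> < \<gamma>"
proof (induction j arbitrary: \<gamma>)
  case (Suc j)
  have step: "\<forall>\<beta>\<in>Fs j - R. \<forall>\<gamma>\<in>Fs (Suc j) - R. \<beta> < \<gamma>"
    using d Suc.prems(2) unfolding decomp_def set_less_def by blast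
  show ?case
  proof (cases "i = j")
    case False
    have "card (Fs j - R) \<noteq> 0"
      using decomp_card_block[OF d, of j] root_less_m[of k] Suc.prems(2) by simp
    then obtain \<delta> where \<delta>: "\<delta> \<in> Fs j - R"
      by (metis all_not_in_conv card.empty)
    have "\<beta> < \<delta>"
      using Suc.IH[OF _ _ Suc.prems(3) \<delta>] False Suc.prems(1,2) by simp
    also have "\<delta> < \<gamma>"
      using step \<delta> Suc.prems(4) by blast
    finally show ?thesis .
  qed (use Suc.prems step in blast)
qed simp

lemma member_level_below:
  assumes "F \<in> level FF K" "\<alpha> \<in> F" "j \<le> K"
  shows "\<exists>G\<in>level FF j. \<alpha> \<in> G"
  using assms
proof (induction "K - j" arbitrary: j)
  case (Suc d)
  then have "d = K - Suc j" "Suc j \<le> K"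
    by arith+
  then obtain G where G: "G \<in> level FF (Suc j)" "\<alpha> \<in> G"
    using Suc.hyps(1) Suc.prems(1,2) by blast
  then obtain Fs R where d: "decomp FF n r j G Fs R"
    using decomp_exists by blast
  then show ?case
    using G(2) decomp_union[OF d] decomp_level[OF d] by blast
qed auto

lemma exists_level_member: "\<exists>F\<in>level FF j. \<alpha> \<in> F"
proof -
  obtain B :: "'a set" where B: "finite B" "card B = Suc (m j)"
    using infinite_arbitrarily_large[OF infinite_carrier] by blast
  obtain F where F: "F \<in> FF" "insert \<alpha> B \<subseteq> F"
    using covered[of "insert \<alpha> B"] B(1) by auto
  obtain K where K: "F \<in> level FF K"
    using member_level F(1) by blast
  have "card B \<le> card F"
    using F finite_member by (intro card_mono) auto
  then have "m j < m K"
    using B(2) card_level[OF K] by simp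
  then have "j \<le> K"
    using strict_mono_m by (simp add: strict_mono_less)
  then show ?thesis
    using member_level_below[OF K, of \<alpha> j] F(2) by blast
qed

definition pos :: "nat \<Rightarrow> 'a \<Rightarrow> nat" where
  "pos k \<alpha> = (SOME p. \<exists>F\<in>level FF k. \<alpha> \<in> F \<and> p = card {\<beta>\<in>F. \<beta> < \<alpha>})"

lemma pos_eq_card:
  assumes F: "F \<in> level FF k" and \<alpha>: "\<alpha> \<in> F"
  shows "pos k \<alpha> = card {\<beta>\<in>F. \<beta> < \<alpha>}"
proof -
  obtain E where E: "E \<in> level FF k" "\<alpha> \<in> E" "pos k \<alpha> = card {\<beta>\<in>E. \<beta> < \<alpha>}"
    using someI_ex[of "\<lambda>p. \<exists>F\<in>level FF k. \<alpha> \<in> F \<and> p = card {\<beta>\<in>F. \<beta> < \<alpha>}"] F \<alpha>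
    unfolding pos_def by blast
  have "{\<beta>\<in>E. \<beta> < \<alpha>} = {\<beta>\<in>F. \<beta> < \<alpha>}"
    using initial_sub_level_inter[OF E(1) F] initial_sub_level_inter[OF F E(1)] E(2) \<alpha>
    unfolding initial_sub_def by blast
  then show ?thesis
    using E(3) by simp
qed

lemma pos_less_m: "pos k \<alpha> < m k"
proof -
  obtain F where F: "F \<in> level FF k" "\<alpha> \<in> F"
    using exists_level_member by blast
  show ?thesis
    using pos_eq_card[OF F] card_less_less_card[OF finite_level[OF F(1)] F(2)] card_level[OF F(1)]
    by simp
qed

lemma inj_on_pos: "F \<in> level FF k \<Longrightarrow> inj_on (pos k) F"
  using inj_on_card_less[OF finite_level] pos_eq_card by (simp add: inj_on_def)

lemma pos_less_root_iff:
  assumes d: "decomp FF n r k F Fs R" and i: "i < n (Suc k)" and \<beta>: "\<beta> \<in> Fs i"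
  shows "pos k \<beta> < r (Suc k) \<longleftrightarrow> \<beta> \<in> R"
proof -
  have pos: "pos k \<beta> = card {\<delta>\<in>Fs i. \<delta> < \<beta>}"
    using pos_eq_card[OF decomp_level[OF d i] \<beta>] .
  have card_R: "card R = r (Suc k)"
    using decomp_card_root[OF d] .
  show ?thesis
  proof (cases "\<beta> \<in> R")
    case False
    then have "R \<subseteq> {\<delta>\<in>Fs i. \<delta> < \<beta>}"
      using decomp_root_subset[OF d i] decomp_root_less[OF d i] \<beta> by blast
    from card_mono[OF _ this] show ?thesis
      using False decomp_finite[OF d i] pos card_R by simp
  next
    case True
    then have "{\<delta>\<in>Fs i. \<delta> < \<beta>} \<subset> R"
      using decomp_root_less[OF d i True] by (auto dest: order.asym)
    from psubset_card_mono[OF decomp_finite_root[OF d] this] show ?thesis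
      using True pos card_R by simp
  qed
qed

lemma pos_Suc_root:
  assumes d: "decomp FF n r k F Fs R" and F: "F \<in> level FF (Suc k)" and \<beta>: "\<beta> \<in> R"
  shows "pos (Suc k) \<beta> = pos k \<beta>"
proof -
  have i: "0 < n (Suc k)"
    using two_le_n[of k] by simp
  have \<beta>0: "\<beta> \<in> Fs 0"
    using decomp_root_subset[OF d i] \<beta> by blast
  have "{\<delta>\<in>F. \<delta> < \<beta>} = {\<delta>\<in>Fs 0. \<delta> < \<beta>}"
  proof (intro equalityI subsetI)
    fix \<delta> assume \<delta>: "\<delta> \<in> {\<delta>\<in>F. \<delta> < \<beta>}"
    then obtain j where j: "j < n (Suc k)" "\<delta> \<in> Fs j"
      using decomp_union[OF d] by blast
    have "\<delta> \<in> R"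
      using decomp_root_less[OF d j(1) \<beta>, of \<delta>] j(2) \<delta> by (auto dest: order.asym)
    then show "\<delta> \<in> {\<delta>\<in>Fs 0. \<delta> < \<beta>}"
      using decomp_root_subset[OF d i] \<delta> by blast
  qed (use decomp_union[OF d] i in blast)
  moreover have "\<beta> \<in> F"
    using decomp_union[OF d] \<beta>0 i by blast
  ultimately show ?thesis
    using pos_eq_card[OF F] pos_eq_card[OF decomp_level[OF d i] \<beta>0] by simp
qed

lemma pos_Suc_block:
  assumes d: "decomp FF n r k F Fs R" and F: "F \<in> level FF (Suc k)"
    and i: "i < n (Suc k)" and \<beta>: "\<beta> \<in> Fs i - R"
  shows "pos (Suc k) \<beta> = (m k - r (Suc k)) * i + pos k \<beta>"
proof -
  let ?U = "\<Union>j<i. Fs j - R"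
  let ?B = "{\<delta>\<in>Fs i. \<delta> < \<beta>}"
  have "{\<delta>\<in>F. \<delta> < \<beta>} = ?U \<union> ?B"
  proof (intro equalityI subsetI)
    fix \<delta> assume \<delta>: "\<delta> \<in> {\<delta>\<in>F. \<delta> < \<beta>}"
    then obtain j where j: "j < n (Suc k)" "\<delta> \<in> Fs j"
      using decomp_union[OF d] by blast
    show "\<delta> \<in> ?U \<union> ?B"
    proof (cases "\<delta> \<in> R")
      case False
      have "\<not> i < j"
        using decomp_blocks_less[OF d _ j(1) \<beta>, of \<delta>] False j(2) \<delta> by (auto dest: order.asym)
      then show ?thesis
        using False j \<delta> by (cases "j = i") auto
    qed (use decomp_root_subset[OF d i] \<delta> in blast)
  next
    fix \<delta> assume "\<delta> \<in> ?U \<union> ?B"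
    then show "\<delta> \<in> {\<delta>\<in>F. \<delta> < \<beta>}"
      using decomp_blocks_less[OF d _ i _ \<beta>] decomp_union[OF d] i by fastforce
  qed
  moreover have "card (?U \<union> ?B) = card ?U + card ?B"
  proof (rule card_Un_disjoint)
    show "finite ?U" "finite ?B"
      using decomp_finite[OF d] i by auto
    have "(Fs j - R) \<inter> Fs i = {}" if "j < i" for j
      using decomp_inter[OF d _ i, of j] that i by auto
    then show "?U \<inter> ?B = {}"
      by blast
  qed
  moreover have "card ?U = i * (m k - r (Suc k))"
  proof -
    have "(Fs j - R) \<inter> (Fs j' - R) = {}" if "j < i" "j' < i" "j \<noteq> j'" for j j'
      using decomp_inter[OF d, of j j'] that i by auto
    then have "card ?U = (\<Sum>j<i. card (Fs j - R))"
      using decomp_finite[OF d] i by (intro card_UN_disjoint) auto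
    also have "\<dots> = i * (m k - r (Suc k))"
      using decomp_card_block[OF d] i by simp
    finally show ?thesis .
  qed
  moreover have "\<beta> \<in> F"
    using decomp_union[OF d] \<beta> i by blast
  ultimately show ?thesis
    using pos_eq_card[OF F] pos_eq_card[OF decomp_level[OF d i], of \<beta>] \<beta> by simp
qed

lemma pos_Suc_block_bounds:
  assumes d: "decomp FF n r k F Fs R" and F: "F \<in> level FF (Suc k)"
    and i: "i < n (Suc k)" and \<beta>: "\<beta> \<in> Fs i - R"
  shows "r (Suc k) \<le> pos (Suc k) \<beta>"
    and "(pos (Suc k) \<beta> - r (Suc k)) div (m k - r (Suc k)) = i"
    and "(pos (Suc k) \<beta> - r (Suc k)) mod (m k - r (Suc k)) = pos k \<beta> - r (Suc k)"
proof -
  have low: "r (Suc k) \<le> pos k \<beta>"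
    using pos_less_root_iff[OF d i, of \<beta>] \<beta> by simp
  have high: "pos k \<beta> - r (Suc k) < m k - r (Suc k)"
    using pos_less_m[of k \<beta>] low by simp
  have eq: "pos (Suc k) \<beta> - r (Suc k) = (pos k \<beta> - r (Suc k)) + (m k - r (Suc k)) * i"
    using pos_Suc_block[OF assms] low by simp
  show "r (Suc k) \<le> pos (Suc k) \<beta>"
    using pos_Suc_block[OF assms] low by simp
  show "(pos (Suc k) \<beta> - r (Suc k)) div (m k - r (Suc k)) = i"
    unfolding eq using high by simp
  show "(pos (Suc k) \<beta> - r (Suc k)) mod (m k - r (Suc k)) = pos k \<beta> - r (Suc k)"
    unfolding eq using high by simp
qed

definition lower_pos :: "nat \<Rightarrow> nat \<Rightarrow> nat" where
  "lower_pos k p =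
     (if p < r (Suc k) then p else r (Suc k) + (p - r (Suc k)) mod (m k - r (Suc k)))"

lemma pos_eq_lower_pos: "pos k \<alpha> = lower_pos k (pos (Suc k) \<alpha>)"
proof -
  obtain F where F: "F \<in> level FF (Suc k)" "\<alpha> \<in> F"
    using exists_level_member by blast
  obtain Fs R where d: "decomp FF n r k F Fs R"
    using decomp_exists[OF F(1)] by blast
  obtain i where i: "i < n (Suc k)" "\<alpha> \<in> Fs i"
    using decomp_union[OF d] F(2) by blast
  show ?thesis
  proof (cases "\<alpha> \<in> R")
    case True
    then show ?thesis
      using pos_Suc_root[OF d F(1)] pos_less_root_iff[OF d i] by (simp add: lower_pos_def)
  next
    case False
    then show ?thesis
      using pos_Suc_block_bounds[OF d F(1) i(1), of \<alpha>] pos_less_root_iff[OF d i] i(2)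
      by (simp add: lower_pos_def)
  qed
qed

lemma pos_eq_below: "pos L \<alpha> = pos L \<beta> \<Longrightarrow> j \<le> L \<Longrightarrow> pos j \<alpha> = pos j \<beta>"
proof (induction "L - j" arbitrary: j)
  case (Suc d)
  then have "pos (Suc j) \<alpha> = pos (Suc j) \<beta>"
    by simp
  then show ?case
    using pos_eq_lower_pos[of j \<alpha>] pos_eq_lower_pos[of j \<beta>] by simp
qed simp

lemma incr_bij_pos:
  assumes d: "decomp FF n r k F Fs R" and i: "i < n (Suc k)"
    and \<phi>: "incr_bij (Fs 0) (Fs i) \<phi>" and \<gamma>: "\<gamma> \<in> Fs 0"
  shows "\<phi> \<gamma> \<in> Fs i" and "pos k (\<phi> \<gamma>) = pos k \<gamma>"
proof -
  show \<phi>\<gamma>: "\<phi> \<gamma> \<in> Fs i"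
    using \<phi> \<gamma> unfolding incr_bij_def bij_betw_def by blast
  have "0 < n (Suc k)"
    using i by simp
  then show "pos k (\<phi> \<gamma>) = pos k \<gamma>"
    using pos_eq_card[OF decomp_level[OF d i] \<phi>\<gamma>] pos_eq_card[OF decomp_level[OF d] \<gamma>]
      card_less_incr_bij[OF \<phi> \<gamma>] by simp
qed

lemma incr_bij_root:
  assumes d: "decomp FF n r k F Fs R" and i: "i < n (Suc k)"
    and \<phi>: "incr_bij (Fs 0) (Fs i) \<phi>" and \<gamma>: "\<gamma> \<in> R"
  shows "\<phi> \<gamma> = \<gamma>"
proof -
  have "\<gamma> \<in> Fs 0" "\<gamma> \<in> Fs i"
    using decomp_root_subset[OF d, of 0] decomp_root_subset[OF d i] i \<gamma> by auto
  then show ?thesis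
    using inj_on_pos[OF decomp_level[OF d i]] incr_bij_pos[OF d i \<phi>] by (auto dest: inj_onD)
qed

lemma incr_bij_block:
  assumes d: "decomp FF n r k F Fs R" and i: "i < n (Suc k)"
    and \<phi>: "incr_bij (Fs 0) (Fs i) \<phi>" and \<gamma>: "\<gamma> \<in> Fs 0 - R"
  shows "\<phi> \<gamma> \<in> Fs i - R"
proof -
  have "0 < n (Suc k)"
    using i by simp
  then show ?thesis
    using incr_bij_pos[OF d i \<phi>, of \<gamma>] pos_less_root_iff[OF d i, of "\<phi> \<gamma>"]
      pos_less_root_iff[OF d, of 0 \<gamma>] \<gamma>
    by auto
qed

section \<open>Digits and the embedding into the reals\<close>

text \<open>For \<open>\<alpha>\<close> outside the root of a level-\<open>k + 1\<close> set, \<open>(pos (Suc k) \<alpha> - r (Suc k)) div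
  (m k - r (Suc k))\<close> is the index of the block containing \<open>\<alpha>\<close> (\<open>pos_Suc_block_bounds\<close>).\<close>

definition marked :: "nat \<Rightarrow> 'a \<Rightarrow> bool" where
  "marked k \<alpha> \<longleftrightarrow> r (Suc k) \<le> pos (Suc k) \<alpha> \<and>
     pos k \<alpha> \<in> set_decode ((pos (Suc k) \<alpha> - r (Suc k)) div (m k - r (Suc k)))"

definition digit :: "nat \<Rightarrow> 'a \<Rightarrow> nat" where
  "digit l \<alpha> = pos l \<alpha> + (case l of 0 \<Rightarrow> 0 | Suc k \<Rightarrow> if marked k \<alpha> then m l else 0)"

definition to_real :: "'a \<Rightarrow> real" where
  "to_real \<alpha> = lex_value (\<lambda>l. 2 * m l) (\<lambda>l. digit l \<alpha>)"

lemma digit_le: "digit l \<alpha> \<le> 2 * m l"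
proof -
  have "pos l \<alpha> \<le> m l"
    using pos_less_m[of l \<alpha>] by simp
  then show ?thesis
    by (cases l) (auto simp: digit_def)
qed

lemma pos_eq_digit_mod: "pos l \<alpha> = digit l \<alpha> mod m l"
  using pos_less_m[of _ \<alpha>] by (cases l) (auto simp: digit_def)

lemma digit_eq_below:
  assumes "pos L \<alpha> = pos L \<beta>" "j \<le> L"
  shows "digit j \<alpha> = digit j \<beta>"
proof (cases j)
  case (Suc k)
  then have "pos j \<alpha> = pos j \<beta>" "pos k \<alpha> = pos k \<beta>"
    using pos_eq_below[OF assms(1)] assms(2) by auto
  then show ?thesis
    using Suc by (simp add: digit_def marked_def)
qed (use pos_eq_below[OF assms] in \<open>simp add: digit_def\<close>)

lemma to_real_less_iff:
  assumes "\<forall>j<L. digit j \<alpha> = digit j \<beta>" "digit L \<alpha> \<noteq> digit L \<beta>"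
  shows "to_real \<alpha> < to_real \<beta> \<longleftrightarrow> digit L \<alpha> < digit L \<beta>"
  unfolding to_real_def using assms digit_le by (intro lex_value_less_iff) auto

lemma inj_to_real: "inj to_real"
proof (rule injI, rule ccontr)
  fix \<alpha> \<beta> :: 'a
  assume "to_real \<alpha> = to_real \<beta>" "\<alpha> \<noteq> \<beta>"
  obtain F where F: "F \<in> FF" "\<alpha> \<in> F" "\<beta> \<in> F"
    using covered[of "{\<alpha>, \<beta>}"] by auto
  obtain l where l: "F \<in> level FF l"
    using member_level[OF F(1)] by blast
  have "pos l \<alpha> \<noteq> pos l \<beta>"
    using inj_on_pos[OF l] F(2,3) \<open>\<alpha> \<noteq> \<beta>\<close> by (auto dest: inj_onD)
  then have "digit l \<alpha> \<noteq> digit l \<beta>"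
    using pos_eq_digit_mod by metis
  then have "to_real \<alpha> \<noteq> to_real \<beta>"
    unfolding to_real_def using digit_le by (intro lex_value_inj) auto
  with \<open>to_real \<alpha> = to_real \<beta>\<close> show False
    by simp
qed

lemma digit_incr_bij:
  assumes "decomp FF n r k F Fs R" "i < n (Suc k)" "incr_bij (Fs 0) (Fs i) \<phi>" "\<gamma> \<in> Fs 0"
    and "j \<le> k"
  shows "digit j (\<phi> \<gamma>) = digit j \<gamma>"
  using digit_eq_below[OF incr_bij_pos(2)[OF assms(1-4)] assms(5)] .

lemma to_real_less_incr_bij:
  assumes d: "decomp FF n r k F Fs R" and i: "i < n (Suc k)"
    and \<phi>: "incr_bij (Fs 0) (Fs i) \<phi>" and \<gamma>: "\<gamma> \<in> Fs 0" and \<delta>: "\<delta> \<in> Fs 0"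
  shows "to_real (\<phi> \<gamma>) < to_real (\<phi> \<delta>) \<longleftrightarrow> to_real \<gamma> < to_real \<delta>"
proof (cases "\<gamma> = \<delta>")
  case False
  have "0 < n (Suc k)"
    using i by simp
  then have "pos k \<gamma> \<noteq> pos k \<delta>"
    using inj_on_pos[OF decomp_level[OF d]] \<gamma> \<delta> False by (auto dest: inj_onD)
  then have "digit k \<gamma> \<noteq> digit k \<delta>"
    using pos_eq_digit_mod by metis
  then obtain L where L: "L \<le> k" "digit L \<gamma> \<noteq> digit L \<delta>" "\<forall>j<L. digit j \<gamma> = digit j \<delta>"
    using exists_first_difference[of "\<lambda>l. digit l \<gamma>" k "\<lambda>l. digit l \<delta>"] by blast
  have same: "digit j (\<phi> \<gamma>) = digit j \<gamma>" "digit j (\<phi> \<delta>) = digit j \<delta>" if "j \<le> L" for j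
    using digit_incr_bij[OF d i \<phi>] \<gamma> \<delta> that L(1) by auto
  have "to_real (\<phi> \<gamma>) < to_real (\<phi> \<delta>) \<longleftrightarrow> digit L (\<phi> \<gamma>) < digit L (\<phi> \<delta>)"
    using L same by (intro to_real_less_iff) auto
  also have "\<dots> \<longleftrightarrow> to_real \<gamma> < to_real \<delta>"
    using L same to_real_less_iff[of L \<gamma> \<delta>] by simp
  finally show ?thesis .
qed simp

lemma marked_incr_bij:
  assumes d: "decomp FF n r k F Fs R" and F: "F \<in> level FF (Suc k)" and i: "i < n (Suc k)"
    and \<phi>: "incr_bij (Fs 0) (Fs i) \<phi>" and \<gamma>: "\<gamma> \<in> Fs 0 - R"
  shows "marked k (\<phi> \<gamma>) \<longleftrightarrow> pos k \<gamma> \<in> set_decode i"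
  using pos_Suc_block_bounds(1,2)[OF d F i incr_bij_block[OF d i \<phi> \<gamma>]]
    incr_bij_pos(2)[OF d i \<phi>] \<gamma>
  by (simp add: marked_def)

lemma to_real_less_if_marked:
  assumes d: "decomp FF n r k F Fs R" and F: "F \<in> level FF (Suc k)"
    and i: "i < n (Suc k)" "i' < n (Suc k)"
    and \<phi>: "incr_bij (Fs 0) (Fs i) \<phi>" and \<phi>': "incr_bij (Fs 0) (Fs i') \<phi>'"
    and \<gamma>: "\<gamma> \<in> Fs 0 - R"
    and unmarked: "pos k \<gamma> \<notin> set_decode i" and marked: "pos k \<gamma> \<in> set_decode i'"
  shows "to_real (\<phi> \<gamma>) < to_real (\<phi>' \<gamma>)"
proof -
  have below: "digit j (\<phi> \<gamma>) = digit j (\<phi>' \<gamma>)" if "j < Suc k" for j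
    using digit_incr_bij[OF d i(1) \<phi>] digit_incr_bij[OF d i(2) \<phi>'] \<gamma> that by simp
  have "digit (Suc k) (\<phi> \<gamma>) = pos (Suc k) (\<phi> \<gamma>)"
    using marked_incr_bij[OF d F i(1) \<phi> \<gamma>] unmarked by (simp add: digit_def)
  also have "\<dots> < m (Suc k)"
    by (rule pos_less_m)
  also have "\<dots> \<le> digit (Suc k) (\<phi>' \<gamma>)"
    using marked_incr_bij[OF d F i(2) \<phi>' \<gamma>] marked by (simp add: digit_def)
  finally show ?thesis
    using below to_real_less_iff[of "Suc k" "\<phi> \<gamma>" "\<phi>' \<gamma>"] by simp
qed

section \<open>Capturing and entanglement\<close>

lemma nth_sorted_to_real_incr_bij:
  assumes d: "decomp FF n r k F Fs R" and i: "i < n (Suc k)"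
    and \<phi>: "incr_bij (Fs 0) (Fs i) \<phi>" and c: "c \<subseteq> Fs 0" and j: "j < card c"
  shows "sorted_list_of_set (to_real ` \<phi> ` c) ! j
           = to_real (\<phi> (inv_into c to_real (sorted_list_of_set (to_real ` c) ! j)))"
proof -
  let ?h = "\<lambda>x. to_real (\<phi> (inv_into c to_real x))"
  have fin: "finite c"
    using decomp_finite[OF d, of 0] i c finite_subset by auto
  have inv: "inv_into c to_real (to_real \<gamma>) = \<gamma>" if "\<gamma> \<in> c" for \<gamma>
    using inv_into_f_f[OF inj_on_subset[OF inj_to_real subset_UNIV] that] .
  have "strict_mono_on (to_real ` c) ?h"
  proof (rule strict_mono_onI, elim imageE)
    fix x y \<gamma> \<delta>
    assume "x < y" "x = to_real \<gamma>" "\<gamma> \<in> c" "y = to_real \<delta>" "\<delta> \<in> c"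
    then show "?h x < ?h y"
      using to_real_less_incr_bij[OF d i \<phi>, of \<gamma> \<delta>] c inv by auto
  qed
  then have "sorted_list_of_set (?h ` to_real ` c) = map ?h (sorted_list_of_set (to_real ` c))"
    using fin by (intro sorted_list_of_set_image_strict_mono) auto
  moreover have "?h ` to_real ` c = to_real ` \<phi> ` c"
    using inv by (auto simp: image_image)
  moreover have "j < length (sorted_list_of_set (to_real ` c))"
    using j fin card_image[OF inj_on_subset[OF inj_to_real subset_UNIV]] by simp
  ultimately show ?thesis
    by simp
qed

lemma capture_realizes:
  assumes d: "decomp FF n r k F Fs R" and F: "F \<in> level FF (Suc k)"
    and n_big: "2 ^ m k \<le> n (Suc k)" and c: "c \<subseteq> Fs 0 - R"
  obtains i i' where "i < n (Suc k)" "i' < n (Suc k)" "i \<noteq> i'"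
    and "\<And>\<phi> \<phi>' j. incr_bij (Fs 0) (Fs i) \<phi> \<Longrightarrow> incr_bij (Fs 0) (Fs i') \<phi>' \<Longrightarrow> j < card c \<Longrightarrow>
           (if t j then sorted_list_of_set (to_real ` \<phi> ` c) ! j < sorted_list_of_set (to_real ` \<phi>' ` c) ! j
            else sorted_list_of_set (to_real ` \<phi>' ` c) ! j < sorted_list_of_set (to_real ` \<phi> ` c) ! j)"
proof -
  have n0: "0 < n (Suc k)"
    using two_le_n[of k] by simp
  have fin: "finite c"
    using decomp_finite[OF d n0] c finite_subset by auto
  have inj: "inj_on to_real c"
    using inj_on_subset[OF inj_to_real subset_UNIV] .
  define e where "e j = inv_into c to_real (sorted_list_of_set (to_real ` c) ! j)" for j
  note e = inv_into_nth_sorted_list_of_set_image[OF fin inj, folded e_def]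
  have "inj_on (pos k) c"
    using c by (intro inj_on_subset[OF inj_on_pos[OF decomp_level[OF d n0]]]) blast
  then have "inj_on (\<lambda>j. pos k (e j)) {..<card c}"
    using e(1,3) by (auto simp: inj_on_def)
  moreover have "(\<lambda>j. pos k (e j)) ` {..<card c} \<subseteq> {..<m k}"
    using pos_less_m by auto
  moreover have "0 < m k"
    using root_less_m[of k] by simp
  txt \<open>\<open>i'\<close> codes the positions of the elements where \<open>t\<close> demands \<open><\<close>, \<open>i\<close> the others.\<close>
  ultimately obtain i i' where "i < n (Suc k)" "i' < n (Suc k)" "i \<noteq> i'"
    and decode: "\<And>j. j < card c \<Longrightarrow> pos k (e j) \<in> set_decode i \<longleftrightarrow> \<not> t j"
      "\<And>j. j < card c \<Longrightarrow> pos k (e j) \<in> set_decode i' \<longleftrightarrow> t j"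
    using exists_complementary_codes[OF _ _ _ n_big, of "\<lambda>j. pos k (e j)" "card c" t] by blast
  moreover have "if t j then sorted_list_of_set (to_real ` \<phi> ` c) ! j < sorted_list_of_set (to_real ` \<phi>' ` c) ! j
      else sorted_list_of_set (to_real ` \<phi>' ` c) ! j < sorted_list_of_set (to_real ` \<phi> ` c) ! j"
    if \<phi>: "incr_bij (Fs 0) (Fs i) \<phi>" and \<phi>': "incr_bij (Fs 0) (Fs i') \<phi>'" and j: "j < card c"
    for \<phi> \<phi>' j
  proof -
    have ej: "e j \<in> Fs 0 - R"
      using e(1)[OF j] c by blast
    have "to_real (\<phi> (e j)) < to_real (\<phi>' (e j))" if "t j"
      using to_real_less_if_marked[OF d F \<open>i < _\<close> \<open>i' < _\<close> \<phi> \<phi>' ej] decode[OF j] that by simp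
    moreover have "to_real (\<phi>' (e j)) < to_real (\<phi> (e j))" if "\<not> t j"
      using to_real_less_if_marked[OF d F \<open>i' < _\<close> \<open>i < _\<close> \<phi>' \<phi> ej] decode[OF j] that by simp
    moreover have "c \<subseteq> Fs 0"
      using c by blast
    ultimately show ?thesis
      using nth_sorted_to_real_incr_bij[OF d \<open>i < _\<close> \<phi> _ j] nth_sorted_to_real_incr_bij[OF d \<open>i' < _\<close> \<phi>' _ j]
      unfolding e_def by auto
  qed
  ultimately show ?thesis
    using that by blast
qed

lemma capture_of_family:
  assumes capturing: "fully_capturing FF n r"
    and uncountable: "\<not> countable A" and A: "\<forall>a\<in>A. finite a \<and> a \<subseteq> range to_real"
  obtains F k Fs R c \<phi> where "F \<in> level FF (Suc k)" "decomp FF n r k F Fs R"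
    and "inj_on c {..<n (Suc k)}"
    and "\<And>i. i < n (Suc k) \<Longrightarrow>
           to_real ` c i \<in> A \<and> c i \<subseteq> Fs i \<and> incr_bij (Fs 0) (Fs i) (\<phi> i) \<and> \<phi> i ` c 0 = c i"
proof -
  define S where "S = (\<lambda>a. to_real -` a) ` A"
  have image_vimage: "to_real ` to_real -` a = a" if "a \<in> A" for a
    using A that by blast
  have "inj_on (\<lambda>a. to_real -` a) A"
  proof (rule inj_onI)
    fix a b assume "a \<in> A" "b \<in> A" "to_real -` a = to_real -` b"
    then show "a = b"
      using image_vimage by metis
  qed
  then have "\<not> countable S"
    unfolding S_def using uncountable countable_image_inj_on by blast
  moreover have "\<forall>s\<in>S. finite s"
    unfolding S_def using A finite_vimageI[OF _ inj_to_real] by blast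
  ultimately obtain C l F where CF: "C \<subseteq> S" "0 < l" "F \<in> level FF l" "fully_captures FF n r l F C"
    using capturing[unfolded fully_capturing_def, rule_format, of S 0] by blast
  then obtain k where l: "l = Suc k"
    using gr0_implies_Suc by blast
  have "card C = n l \<and> (\<exists>Fs R. decomp FF n r k F Fs R \<and> (\<exists>c. C = c ` {..<n l} \<and>
      (\<forall>i<n l. c i \<subseteq> Fs i \<and> c i - R \<noteq> {} \<and> (\<exists>\<phi>. incr_bij (Fs 0) (Fs i) \<phi> \<and> \<phi> ` c 0 = c i))))"
    using CF(4) unfolding fully_captures_def l diff_Suc_1 by (elim conjE) (intro conjI)
  then obtain Fs R c where d: "decomp FF n r k F Fs R" and C: "C = c ` {..<n l}" "card C = n l"
    and c: "\<forall>i<n l. c i \<subseteq> Fs i \<and> c i - R \<noteq> {} \<and> (\<exists>\<phi>. incr_bij (Fs 0) (Fs i) \<phi> \<and> \<phi> ` c 0 = c i)"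
    by (elim conjE exE)
  define \<phi> where "\<phi> i = (SOME \<phi>. incr_bij (Fs 0) (Fs i) \<phi> \<and> \<phi> ` c 0 = c i)" for i
  have \<phi>: "incr_bij (Fs 0) (Fs i) (\<phi> i) \<and> \<phi> i ` c 0 = c i" if "i < n l" for i
  proof -
    have "\<exists>\<phi>. incr_bij (Fs 0) (Fs i) \<phi> \<and> \<phi> ` c 0 = c i"
      using c that by simp
    then show ?thesis
      unfolding \<phi>_def by (rule someI_ex)
  qed
  have inj: "inj_on c {..<n (Suc k)}"
    using C l by (intro eq_card_imp_inj_on) auto
  show ?thesis
  proof (rule that[OF _ d inj])
    show "F \<in> level FF (Suc k)"
      using CF(3) l by simp
    fix i assume i: "i < n (Suc k)"
    have "c i \<in> S"
      using C(1) CF(1) i l by blast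
    then have "to_real ` c i \<in> A"
      unfolding S_def using image_vimage by auto
    then show "to_real ` c i \<in> A \<and> c i \<subseteq> Fs i \<and> incr_bij (Fs 0) (Fs i) (\<phi> i) \<and> \<phi> i ` c 0 = c i"
      using c \<phi> i l by simp
  qed
qed

lemma capture_avoids_root:
  assumes d: "decomp FF n r k F Fs R"
    and \<phi>: "incr_bij (Fs 0) (Fs 1) \<phi>" and c: "\<phi> ` c = c'" and disjoint: "c \<inter> c' = {}"
  shows "c \<inter> R = {}"
proof -
  have one: "1 < n (Suc k)"
    using two_le_n[of k] by simp
  have "\<gamma> \<in> c'" if "\<gamma> \<in> c" "\<gamma> \<in> R" for \<gamma>
  proof -
    have "\<phi> \<gamma> = \<gamma>"
      by (rule incr_bij_root[OF d one \<phi> that(2)])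
    then show ?thesis
      using c imageI[of \<gamma> c \<phi>] that(1) by simp
  qed
  then show ?thesis
    using disjoint by blast
qed

lemma capture_of_disjoint_family:
  assumes capturing: "fully_capturing FF n r" and uncountable: "\<not> countable A"
    and A: "\<forall>a\<in>A. finite a \<and> a \<subseteq> range to_real"
    and disjoint: "\<forall>a\<in>A. \<forall>b\<in>A. a \<noteq> b \<longrightarrow> a \<inter> b = {}"
  obtains F k Fs R c \<phi> where "F \<in> level FF (Suc k)" "decomp FF n r k F Fs R" "c \<subseteq> Fs 0 - R"
    and "\<And>i. i < n (Suc k) \<Longrightarrow> to_real ` \<phi> i ` c \<in> A \<and> incr_bij (Fs 0) (Fs i) (\<phi> i)"
    and "\<And>i j. i < n (Suc k) \<Longrightarrow> j < n (Suc k) \<Longrightarrow> i \<noteq> j \<Longrightarrow> to_real ` \<phi> i ` c \<noteq> to_real ` \<phi> j ` c"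
proof -
  obtain F k Fs R c \<phi> where F: "F \<in> level FF (Suc k)" and d: "decomp FF n r k F Fs R"
    and inj_c: "inj_on c {..<n (Suc k)}"
    and c: "\<And>i. i < n (Suc k) \<Longrightarrow>
      to_real ` c i \<in> A \<and> c i \<subseteq> Fs i \<and> incr_bij (Fs 0) (Fs i) (\<phi> i) \<and> \<phi> i ` c 0 = c i"
    using capture_of_family[OF capturing uncountable A] by blast
  have image_neq: "to_real ` c i \<noteq> to_real ` c j" if "i < n (Suc k)" "j < n (Suc k)" "i \<noteq> j" for i j
  proof -
    have "c i \<noteq> c j"
      using inj_onD[OF inj_c] that by blast
    then show ?thesis
      using inj_image_eq_iff[OF inj_to_real] by simp
  qed
  have "to_real ` c 0 \<inter> to_real ` c 1 = {}"
    using disjoint c[of 0] c[of 1] image_neq[of 0 1] two_le_n[of k] by auto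
  then have "c 0 \<inter> c 1 = {}"
    by (simp add: image_Int[OF inj_to_real, symmetric])
  then have "c 0 \<inter> R = {}"
    using two_le_n[of k] c[of 1] by (intro capture_avoids_root[OF d, of "\<phi> 1" _ "c 1"]) auto
  then have "c 0 \<subseteq> Fs 0 - R"
    using c[of 0] two_le_n[of k] by auto
  then show ?thesis
  proof (rule that[OF F d])
    fix i assume "i < n (Suc k)"
    then show "to_real ` \<phi> i ` c 0 \<in> A \<and> incr_bij (Fs 0) (Fs i) (\<phi> i)"
      using c by simp
  next
    fix i j assume "i < n (Suc k)" "j < n (Suc k)" "i \<noteq> j"
    then show "to_real ` \<phi> i ` c 0 \<noteq> to_real ` \<phi> j ` c 0"
      using c image_neq by simp
  qed
qed

theorem entangled_range_to_real:
  assumes n_big: "\<forall>k. 2 ^ m k \<le> n (Suc k)" and capturing: "fully_capturing FF n r"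
    and uncountable: "\<not> countable (UNIV :: 'a set)"
  shows "entangled (range to_real)"
  unfolding entangled_def k_entangled_def
proof (intro allI conjI impI)
  show "\<not> countable (range to_real)"
    using uncountable countable_image_inj_on[OF _ inj_to_real] by blast
  fix K A t
  assume "A \<subseteq> ksubsets K (range to_real) \<and> \<not> countable A \<and>
    (\<forall>a\<in>A. \<forall>b\<in>A. a \<noteq> b \<longrightarrow> a \<inter> b = {})"
  then have A: "\<forall>a\<in>A. finite a \<and> card a = K \<and> a \<subseteq> range to_real"
    and uncountable_A: "\<not> countable A" and disjoint: "\<forall>a\<in>A. \<forall>b\<in>A. a \<noteq> b \<longrightarrow> a \<inter> b = {}"
    unfolding ksubsets_def by auto
  have A': "\<forall>a\<in>A. finite a \<and> a \<subseteq> range to_real"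
    using A by blast
  obtain F k Fs R c \<phi> where F: "F \<in> level FF (Suc k)" and d: "decomp FF n r k F Fs R"
    and c: "c \<subseteq> Fs 0 - R"
    and \<phi>: "\<And>i. i < n (Suc k) \<Longrightarrow> to_real ` \<phi> i ` c \<in> A \<and> incr_bij (Fs 0) (Fs i) (\<phi> i)"
    and image_neq: "\<And>i j. i < n (Suc k) \<Longrightarrow> j < n (Suc k) \<Longrightarrow> i \<noteq> j \<Longrightarrow>
      to_real ` \<phi> i ` c \<noteq> to_real ` \<phi> j ` c"
    using capture_of_disjoint_family[OF capturing uncountable_A A' disjoint] by blast
  obtain i i' where i: "i < n (Suc k)" "i' < n (Suc k)" "i \<noteq> i'"
    and realized: "\<And>\<phi> \<phi>' j. incr_bij (Fs 0) (Fs i) \<phi> \<Longrightarrow> incr_bij (Fs 0) (Fs i') \<phi>' \<Longrightarrow>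
        j < card c \<Longrightarrow>
        (if t j then sorted_list_of_set (to_real ` \<phi> ` c) ! j < sorted_list_of_set (to_real ` \<phi>' ` c) ! j
         else sorted_list_of_set (to_real ` \<phi>' ` c) ! j < sorted_list_of_set (to_real ` \<phi> ` c) ! j)"
    using capture_realizes[OF d F n_big[rule_format] c] by blast
  let ?a = "to_real ` \<phi> i ` c" and ?b = "to_real ` \<phi> i' ` c"
  have members: "?a \<in> A" "?b \<in> A" and neq: "?a \<noteq> ?b"
    using \<phi> image_neq i by auto
  have incr: "incr_bij (Fs 0) (Fs i) (\<phi> i)" "incr_bij (Fs 0) (Fs i') (\<phi> i')"
    using \<phi> i by auto
  have "inj_on (\<phi> i) (Fs 0)"
    using incr(1) unfolding incr_bij_def bij_betw_def by blast
  then have "inj_on (\<phi> i) c"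
    by (rule inj_on_subset) (use c in blast)
  then have "card c = card ?a"
    using card_image[OF inj_on_subset[OF inj_to_real subset_UNIV], of "\<phi> i ` c"] card_image[of "\<phi> i" c]
    by simp
  then have card: "card c = K"
    using A members(1) by simp
  have "?a \<inter> ?b = {}"
    by (rule disjoint[rule_format, OF members neq])
  moreover have "if t j then sorted_list_of_set ?a ! j < sorted_list_of_set ?b ! j
      else sorted_list_of_set ?b ! j < sorted_list_of_set ?a ! j"
    if "j < K" for j
    using realized[OF incr, of j] that card by simp
  ultimately have "realizes K t ?a ?b"
    unfolding realizes_def by blast
  then show "\<exists>a\<in>A. \<exists>b\<in>A. a \<noteq> b \<and> realizes K t a b"
    using members neq by (intro bexI[of _ ?a] bexI[of _ ?b]) auto
qed

end

theorem mainTheorem7: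
  assumes "\<not> countable (UNIV :: 'a::wellorder set)"
    and "\<forall>x::'a. countable {y. y < x}"
    and "FCA TYPE('a)"
  shows "\<exists>E::real set. entangled E"
proof -
  obtain FF :: "'a set set"
    where FF: "construction_scheme UNIV FF coding_m coding_n coding_r"
      "fully_capturing FF coding_n coding_r"
    using assms(3) is_type_coding unfolding FCA_def by blast
  interpret scheme FF coding_m coding_n coding_r
    using FF(1) is_type_coding assms(1) countable_finite by unfold_locales blast+
  have "entangled (range to_real)"
    using entangled_range_to_real FF(2) assms(1) by (simp add: coding_n_def)
  then show ?thesis
    by blast
qed

end
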